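(* For all $m,t\in\mathbb{N}$ and $1\leq r\leq m$, \[ R_t(r,m)\leq \left(1-\frac{1}{2^t}\right)2^m -\frac{\sqrt{2^t-1}}{2^t}\binom{m}{r}. \]
   Context: For a $t\times n$ matrix $\mathbf{v}$ over $\mathbb{F}_2$ with rows $\overline{v}_1,\dots,\overline{v}_t$, $\mathrm{wt}^{(t)}(\mathbf{v})=\left|\bigcup_{i} \mathrm{supp}(\overline{v}_i)\right|$ and $d^{(t)}(\mathbf{u},\mathbf{v})=\mathrm{wt}^{(t)}(\mathbf{u}-\mathbf{v})$. For a linear code $C\subseteq\mathbb{F}_2^n$, $C^t$ is the set of $t\times n$ matrices all of whose rows lie in $C$, and $R_t(C)$ is the smallest integer $\rho$ such that for every $\mathbf{v}\in\mathbb{F}_2^{t\times n}$ some $\mathbf{c}\in C^t$ has $d^{(t)}(\mathbf{v},\mathbf{c})\le\rho$. Reed–Muller codes $\mathrm{RM}(r,m)\subseteq\mathbb{F}_2^{2^m}$: $\mathrm{RM}(0,m)=\{\overline{0},\overline{1}\}$, $\mathrm{RM}(m,m)=\mathbb{F}_2^{2^m}$, and for $1\leq r\leq m-1$, $\mathrm{RM}(r,m)=\{(\overline{u},\overline{u}+\overline{v}) : \overline{u}\in \mathrm{RM}(r,m-1),\ \overline{v}\in\mathrm{RM}(r-1,m-1)\}$. $R_t(r,m)=R_t(\mathrm{RM}(r,m))$. *)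

theory Defs
  imports Complex_Main
begin

text \<open>Vectors of F_2^n are boolean lists of length n (True = 1); addition is
  componentwise exclusive or. A t x n matrix is a function from row indices to
  rows; only rows i < t are relevant.\<close>

definition vadd :: "bool list \<Rightarrow> bool list \<Rightarrow> bool list" where
  "vadd u v = map2 (\<noteq>) u v"

definition supp :: "bool list \<Rightarrow> nat set" where
  "supp v = {j. j < length v \<and> v ! j}"

definition wt_t :: "nat \<Rightarrow> (nat \<Rightarrow> bool list) \<Rightarrow> nat" where
  "wt_t t V = card (\<Union>i<t. supp (V i))"

definition d_t :: "nat \<Rightarrow> (nat \<Rightarrow> bool list) \<Rightarrow> (nat \<Rightarrow> bool list) \<Rightarrow> nat" where
  "d_t t U V = wt_t t (\<lambda>i. vadd (U i) (V i))"

definition cov_rad_t :: "nat \<Rightarrow> nat \<Rightarrow> bool list set \<Rightarrow> nat" where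
  "cov_rad_t t n C = (LEAST \<rho>. \<forall>V. (\<forall>i<t. length (V i) = n) \<longrightarrow>
       (\<exists>U. (\<forall>i<t. U i \<in> C) \<and> d_t t V U \<le> \<rho>))"

fun RM :: "nat \<Rightarrow> nat \<Rightarrow> bool list set" where
  "RM r 0 = {v. length v = 1}"
| "RM r (Suc m) =
     (if r = 0 then {replicate (2^Suc m) False, replicate (2^Suc m) True}
      else if Suc m \<le> r then {v. length v = 2^Suc m}
      else {u @ vadd u v | u v. u \<in> RM r m \<and> v \<in> RM (r - 1) m})"

definition R_t :: "nat \<Rightarrow> nat \<Rightarrow> nat \<Rightarrow> nat" where
  "R_t t r m = cov_rad_t t (2^m) (RM r m)"

end

theory Submission imports Defs begin

text \<open>
  RM(r, m+1) is the (u | u+v) combination of RM(r, m) and RM(r-1, m): covering the left half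
  of each row by RM(r, m) and then the right half, shifted by the chosen left codeword, by
  RM(r-1, m) gives R_t(r, m+1) \<le> R_t(r, m) + R_t(r-1, m). The claimed bound satisfies the same
  Pascal recursion and R_t(m, m) = 0, so everything reduces to r = 1.

  For RM(1, m), Parseval's identity says that the squared correlations of all codewords with a
  word v, restricted to any set S of positions, sum to |RM(1, m)| |S|. Hence some codeword
  agrees with v on at least |S|/2 + sqrt |S| / 2 positions of S. Choosing the t rows greedily,
  each on the positions where all previous rows already agree, leaves at least h_t common
  agreements, where h_0 = 2^m and h_(k+1) = h_k/2 + sqrt h_k / 2, and R_t(1, m) \<le> 2^m - h_t.
\<close>

lemma length_vadd [simp]: "length (vadd u v) = min (length u) (length v)"
  by (simp add: vadd_def)

lemma nth_vadd [simp]: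
  "j < length u \<Longrightarrow> j < length v \<Longrightarrow> vadd u v ! j = (u ! j \<noteq> v ! j)"
  by (simp add: vadd_def)

lemma vadd_append:
  "length a = length c \<Longrightarrow> vadd (a @ b) (c @ d) = vadd a c @ vadd b d"
  by (simp add: vadd_def)

lemma vadd_assoc: "vadd (vadd u v) w = vadd u (vadd v w)"
  by (rule nth_equalityI) auto

lemma vadd_self: "vadd u u = replicate (length u) False"
  by (rule nth_equalityI) auto

lemma finite_supp [simp]: "finite (supp v)"
  by (simp add: supp_def)

lemma supp_replicate_False [simp]: "supp (replicate n False) = {}"
  by (simp add: supp_def)

lemma supp_append: "supp (a @ b) = supp a \<union> (\<lambda>k. k + length a) ` supp b"
proof (rule set_eqI)
  fix j
  show "j \<in> supp (a @ b) \<longleftrightarrow> j \<in> supp a \<union> (\<lambda>k. k + length a) ` supp b"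
    by (cases "j < length a")
      (auto simp: supp_def nth_append intro: image_eqI[of _ _ "j - length a"])
qed

lemma wt_t_cong: "(\<And>i. i < t \<Longrightarrow> A i = B i) \<Longrightarrow> wt_t t A = wt_t t B"
  by (simp add: wt_t_def)

lemma wt_t_append:
  assumes "\<forall>i<t. length (A i) = n"
  shows "wt_t t (\<lambda>i. A i @ B i) = wt_t t A + wt_t t B"
proof -
  let ?shift = "\<lambda>k. k + n"
  have "(\<Union>i<t. supp (A i @ B i)) = (\<Union>i<t. supp (A i)) \<union> ?shift ` (\<Union>i<t. supp (B i))"
    using assms by (auto simp: supp_append)
  moreover have "(\<Union>i<t. supp (A i)) \<inter> ?shift ` (\<Union>i<t. supp (B i)) = {}"
    using assms by (fastforce simp: supp_def)
  ultimately show ?thesis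
    unfolding wt_t_def by (simp add: card_Un_disjoint card_image)
qed

lemma RM_length: "v \<in> RM r m \<Longrightarrow> length v = 2 ^ m"
  by (induction m arbitrary: r v) (auto split: if_splits)

lemma RM_nonempty: "RM r m \<noteq> {}"
proof (induction m arbitrary: r)
  case 0
  have "[True] \<in> RM r 0" by simp
  then show ?case by blast
next
  case (Suc m)
  then obtain u w where "u \<in> RM r m" "w \<in> RM (r - 1) m" by blast
  moreover have "\<exists>v :: bool list. length v = 2 * 2 ^ m"
    by (rule exI[of _ "replicate (2 * 2 ^ m) True"]) simp
  ultimately show ?case by (auto split: if_splits)
qed

lemma RM_finite: "finite (RM r m)"
proof (rule finite_subset)
  show "RM r m \<subseteq> {xs. set xs \<subseteq> UNIV \<and> length xs = 2 ^ m}" using RM_length by auto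
qed (rule finite_lists_length_eq, simp)

lemma RM_Suc:
  "1 \<le> r \<Longrightarrow> r \<le> m \<Longrightarrow>
    RM r (Suc m) = {u @ vadd u v | u v. u \<in> RM r m \<and> v \<in> RM (r - 1) m}"
  by simp

declare RM.simps(2) [simp del]

lemma cov_rad_t_le:
  assumes "\<And>V. \<forall>i<t. length (V i) = n \<Longrightarrow> \<exists>U. (\<forall>i<t. U i \<in> C) \<and> d_t t V U \<le> \<rho>"
  shows "cov_rad_t t n C \<le> \<rho>"
  unfolding cov_rad_t_def by (rule Least_le) (use assms in blast)

lemma cov_rad_t_attained:
  assumes "C \<noteq> {}" and "\<forall>i<t. length (V i) = n"
  obtains U where "\<forall>i<t. U i \<in> C" and "d_t t V U \<le> cov_rad_t t n C"
proof -
  obtain c where c: "c \<in> C" using assms(1) by blast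
  let ?P = "\<lambda>\<rho>. \<forall>V. (\<forall>i<t. length (V i) = n) \<longrightarrow>
    (\<exists>U. (\<forall>i<t. U i \<in> C) \<and> d_t t V U \<le> \<rho>)"
  have "?P n"
  proof (intro allI impI)
    fix V :: "nat \<Rightarrow> bool list"
    assume "\<forall>i<t. length (V i) = n"
    then have "(\<Union>i<t. supp (vadd (V i) c)) \<subseteq> {..<n}" by (auto simp: supp_def)
    then have "d_t t V (\<lambda>_. c) \<le> n"
      unfolding d_t_def wt_t_def by (metis card_lessThan card_mono finite_lessThan)
    with c show "\<exists>U. (\<forall>i<t. U i \<in> C) \<and> d_t t V U \<le> n"
      by (intro exI[of _ "\<lambda>_. c"]) simp
  qed
  then have "?P (cov_rad_t t n C)" unfolding cov_rad_t_def by (rule LeastI)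
  with assms(2) that show ?thesis by blast
qed

lemma R_t_diag: "R_t t m m = 0"
proof -
  have "cov_rad_t t (2 ^ m) (RM m m) \<le> 0"
  proof (rule cov_rad_t_le)
    fix V :: "nat \<Rightarrow> bool list"
    assume "\<forall>i<t. length (V i) = 2 ^ m"
    moreover have "d_t t V V = 0" by (simp add: d_t_def wt_t_def vadd_self)
    moreover have "RM m m = {v. length v = 2 ^ m}" by (cases m) (auto simp: RM.simps)
    ultimately show "\<exists>U. (\<forall>i<t. U i \<in> RM m m) \<and> d_t t V U \<le> 0" by auto
  qed
  then show ?thesis by (simp add: R_t_def)
qed

lemma R_t_Suc_le:
  assumes "1 \<le> r" and "r \<le> m"
  shows "R_t t r (Suc m) \<le> R_t t r m + R_t t (r - 1) m"
  unfolding R_t_def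
proof (rule cov_rad_t_le)
  fix V :: "nat \<Rightarrow> bool list"
  assume len: "\<forall>i<t. length (V i) = 2 ^ Suc m"
  define L where "L i = take (2 ^ m) (V i)" for i
  define W0 where "W0 i = drop (2 ^ m) (V i)" for i
  have "\<forall>i<t. length (L i) = 2 ^ m" using len by (simp add: L_def)
  then obtain U1 where U1: "\<forall>i<t. U1 i \<in> RM r m"
    and d1: "d_t t L U1 \<le> cov_rad_t t (2 ^ m) (RM r m)"
    using cov_rad_t_attained[OF RM_nonempty] by blast
  have len_U1: "\<forall>i<t. length (U1 i) = 2 ^ m" using U1 RM_length by blast
  define W where "W i = vadd (W0 i) (U1 i)" for i
  have "\<forall>i<t. length (W i) = 2 ^ m" using len len_U1 by (simp add: W_def W0_def)
  then obtain U2 where U2: "\<forall>i<t. U2 i \<in> RM (r - 1) m"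
    and d2: "d_t t W U2 \<le> cov_rad_t t (2 ^ m) (RM (r - 1) m)"
    using cov_rad_t_attained[OF RM_nonempty] by blast
  define U where "U i = U1 i @ vadd (U1 i) (U2 i)" for i
  have "\<forall>i<t. U i \<in> RM r (Suc m)" using U1 U2 assms by (auto simp: U_def RM_Suc)
  moreover have "d_t t V U = d_t t L U1 + d_t t W U2"
  proof -
    have "vadd (V i) (U i) = vadd (L i) (U1 i) @ vadd (W i) (U2 i)" if "i < t" for i
    proof -
      have "V i = L i @ W0 i" by (simp add: L_def W0_def)
      moreover have "length (L i) = length (U1 i)"
        using that len len_U1 by (simp add: L_def)
      ultimately show ?thesis by (simp add: U_def W_def vadd_append vadd_assoc)
    qed
    then have "d_t t V U = wt_t t (\<lambda>i. vadd (L i) (U1 i) @ vadd (W i) (U2 i))"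
      unfolding d_t_def by (rule wt_t_cong)
    also have "\<dots> = d_t t L U1 + d_t t W U2"
      unfolding d_t_def using len len_U1 by (intro wt_t_append[where n = "2 ^ m"]) (simp add: L_def)
    finally show ?thesis .
  qed
  ultimately show "\<exists>U. (\<forall>i<t. U i \<in> RM r (Suc m)) \<and>
      d_t t V U \<le> cov_rad_t t (2 ^ m) (RM r m) + cov_rad_t t (2 ^ m) (RM (r - 1) m)"
    using d1 d2 by (metis add_mono)
qed

lemma vadd_replicate: "vadd u (replicate (length u) e) = (if e then map Not u else u)"
  by (rule nth_equalityI) auto

lemma RM_1_Suc:
  "RM 1 (Suc m) = (\<lambda>(u, e). u @ (if e then map Not u else u)) ` (RM 1 m \<times> UNIV)"
proof (cases m)
  case 0
  have "v \<in> (\<lambda>(u, e). u @ (if e then map Not u else u)) ` (RM 1 0 \<times> UNIV)"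
    if "length v = 2" for v :: "bool list"
  proof -
    obtain a b where "v = [a, b]"
      using \<open>length v = 2\<close> by (auto simp: numeral_2_eq_2 length_Suc_conv)
    then show ?thesis by (intro image_eqI[of _ _ "([a], a \<noteq> b)"]) auto
  qed
  with 0 show ?thesis by (auto simp: RM.simps)
next
  case (Suc k)
  have RM_0: "RM 0 m = range (\<lambda>e. replicate (2 ^ m) e)"
    using Suc by (auto simp: UNIV_bool RM.simps)
  have "RM 1 (Suc m) = {u @ vadd u v | u v. u \<in> RM 1 m \<and> v \<in> RM 0 m}"
    using RM_Suc[of 1 m] Suc by (simp del: RM.simps)
  also have "\<dots> = (\<lambda>(u, e). u @ vadd u (replicate (2 ^ m) e)) ` (RM 1 m \<times> UNIV)"
    unfolding RM_0 by (auto simp del: RM.simps)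
  also have "\<dots> = (\<lambda>(u, e). u @ (if e then map Not u else u)) ` (RM 1 m \<times> UNIV)"
    by (rule image_cong) (auto simp: RM_length simp flip: vadd_replicate simp del: RM.simps)
  finally show ?thesis .
qed

lemma map_Not_eq_self_iff [simp]:
  "map Not u = u \<longleftrightarrow> u = []" "u = map Not u \<longleftrightarrow> u = []"
  by (cases u; auto)+

lemma inj_on_RM_1_Suc:
  "inj_on (\<lambda>(u, e). u @ (if e then map Not u else u)) (RM 1 m \<times> UNIV)"
proof (rule inj_onI, clarify)
  fix u1 e1 u2 e2
  assume "u1 \<in> RM 1 m" "u2 \<in> RM 1 m"
    and eq: "u1 @ (if e1 then map Not u1 else u1) = u2 @ (if e2 then map Not u2 else u2)"
  then have "length u1 = 2 ^ m" and "length u2 = 2 ^ m" by (simp_all add: RM_length)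
  with eq show "u1 = u2 \<and> e1 = e2"
    by (cases e1; cases e2) (auto simp: append_eq_append_conv)
qed

lemma card_RM_1_Suc: "card (RM 1 (Suc m)) = 2 * card (RM 1 m)"
  unfolding RM_1_Suc
  by (subst card_image[OF inj_on_RM_1_Suc]) (simp add: card_cartesian_product)

lemma RM_1_map_Not: "c \<in> RM 1 m \<Longrightarrow> map Not c \<in> RM 1 m"
proof (induction m arbitrary: c)
  case 0
  then show ?case by simp
next
  case (Suc m)
  then obtain u e where "u \<in> RM 1 m" and "c = u @ (if e then map Not u else u)"
    unfolding RM_1_Suc by (auto split del: if_split)
  moreover from \<open>u \<in> RM 1 m\<close> have "map Not u \<in> RM 1 m" by (rule Suc.IH)
  ultimately have "map Not c = (\<lambda>(u, e). u @ (if e then map Not u else u)) (map Not u, e)"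
    and "(map Not u, e) \<in> RM 1 m \<times> UNIV"
    by simp_all
  then show ?case unfolding RM_1_Suc by (rule image_eqI)
qed

definition corr :: "bool list \<Rightarrow> bool list \<Rightarrow> nat set \<Rightarrow> int" where
  "corr c v S = (\<Sum>x\<in>S. if c ! x = v ! x then 1 else -1)"

lemma corr_map_Not: "S \<subseteq> {..<length c} \<Longrightarrow> corr (map Not c) v S = - corr c v S"
  unfolding corr_def by (auto simp: sum_negf[symmetric] intro!: sum.cong)

lemma corr_eq_agreements:
  "finite S \<Longrightarrow> corr c v S = 2 * int (card {x\<in>S. c ! x = v ! x}) - int (card S)"
proof -
  assume fin: "finite S"
  let ?A = "{x\<in>S. c ! x = v ! x}" and ?D = "{x\<in>S. c ! x \<noteq> v ! x}"
  have "corr c v S = int (card ?A) - int (card ?D)"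
    unfolding corr_def using fin by (simp add: sum.If_cases Int_def)
  moreover have "card S = card ?A + card ?D"
    using fin by (subst card_Un_disjoint[symmetric]) (auto intro: arg_cong[where f = card])
  ultimately show ?thesis by simp
qed

lemma sum_split_at:
  fixes S :: "nat set"
  assumes "finite S"
  shows "sum f S = sum f {x\<in>S. x < N} + (\<Sum>k | k + N \<in> S. f (k + N))"
proof -
  have "{k. k + N \<in> S} \<subseteq> (\<lambda>x. x - N) ` S" by force
  then have fin: "finite {k. k + N \<in> S}" using assms by (meson finite_imageI finite_subset)
  have "x \<in> (\<lambda>k. k + N) ` {k. k + N \<in> S}" if "x \<in> S" "\<not> x < N" for x
    using that by (intro image_eqI[of x _ "x - N"]) auto
  then have "S = {x\<in>S. x < N} \<union> (\<lambda>k. k + N) ` {k. k + N \<in> S}" by auto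
  also have "sum f \<dots> = sum f {x\<in>S. x < N} + sum f ((\<lambda>k. k + N) ` {k. k + N \<in> S})"
    using assms fin by (intro sum.union_disjoint) auto
  finally have "sum f S = sum f {x\<in>S. x < N} + sum f ((\<lambda>k. k + N) ` {k. k + N \<in> S})" .
  then show ?thesis by (simp add: sum.reindex)
qed

lemma corr_append:
  assumes "length u = N" and "S \<subseteq> {..<length v}"
  shows "corr (u @ w) v S = corr u (take N v) {x\<in>S. x < N} + corr w (drop N v) {k. k + N \<in> S}"
proof -
  have "finite S" using assms(2) finite_subset by blast
  then show ?thesis
    unfolding corr_def using assms
    by (subst sum_split_at[where N = N])
      (auto simp: nth_append add.commute intro!: sum.cong arg_cong2[where f = "(+)"])
qed

lemma sum_corr_RM_1_squared:
  assumes "S \<subseteq> {..<2 ^ m}" and "length v = 2 ^ m"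
  shows "(\<Sum>c\<in>RM 1 m. (corr c v S)\<^sup>2) = int (card (RM 1 m)) * int (card S)"
  using assms
proof (induction m arbitrary: S v)
  case 0
  then have "S = {} \<or> S = {0}" by auto
  moreover have "corr c v {} = 0" and "(corr c v {0})\<^sup>2 = 1" for c
    by (simp_all add: corr_def)
  ultimately show ?case by auto
next
  case (Suc m)
  let ?S0 = "{x\<in>S. x < 2 ^ m}" and ?S1 = "{k. k + 2 ^ m \<in> S}"
  let ?v0 = "take (2 ^ m) v" and ?v1 = "drop (2 ^ m) v"
  have S1: "?S1 \<subseteq> {..<2 ^ m}" using Suc.prems by auto
  define a where "a u = corr u ?v0 ?S0" for u
  define b where "b u = corr u ?v1 ?S1" for u
  have IH0: "(\<Sum>u\<in>RM 1 m. (a u)\<^sup>2) = int (card (RM 1 m)) * int (card ?S0)"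
    unfolding a_def using Suc.prems by (intro Suc.IH) auto
  have IH1: "(\<Sum>u\<in>RM 1 m. (b u)\<^sup>2) = int (card (RM 1 m)) * int (card ?S1)"
    unfolding b_def using Suc.prems S1 by (intro Suc.IH) auto
  have corr_u_u: "corr (u @ u) v S = a u + b u"
    and corr_u_not_u: "corr (u @ map Not u) v S = a u - b u" if "u \<in> RM 1 m" for u
    using that Suc.prems RM_length[OF that]
    by (simp_all add: a_def b_def corr_append corr_map_Not S1)
  have "(\<Sum>c\<in>RM 1 (Suc m). (corr c v S)\<^sup>2)
      = (\<Sum>(u, e)\<in>RM 1 m \<times> UNIV. (corr (u @ (if e then map Not u else u)) v S)\<^sup>2)"
    unfolding RM_1_Suc by (subst sum.reindex[OF inj_on_RM_1_Suc]) (simp add: case_prod_beta)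
  also have "\<dots> = (\<Sum>u\<in>RM 1 m. (a u + b u)\<^sup>2 + (a u - b u)\<^sup>2)"
    by (simp add: sum.cartesian_product[symmetric] UNIV_bool corr_u_u corr_u_not_u add.commute
        cong: sum.cong)
  also have "\<dots> = 2 * ((\<Sum>u\<in>RM 1 m. (a u)\<^sup>2) + (\<Sum>u\<in>RM 1 m. (b u)\<^sup>2))"
    by (simp add: power2_sum power2_diff sum.distrib sum_distrib_left algebra_simps)
  also have "\<dots> = int (card (RM 1 (Suc m))) * (int (card ?S0) + int (card ?S1))"
    unfolding IH0 IH1 card_RM_1_Suc by (simp add: algebra_simps)
  also have "int (card ?S0) + int (card ?S1) = int (card S)"
    using sum_split_at[of S "\<lambda>_. 1 :: nat" "2 ^ m"] Suc.prems finite_subset by fastforce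
  finally show ?case .
qed

lemma RM_1_agreement_ge:
  assumes "S \<subseteq> {..<2 ^ m}" and "length v = 2 ^ m"
  obtains c where "c \<in> RM 1 m"
    and "real (card S) / 2 + sqrt (real (card S)) / 2 \<le> real (card {x\<in>S. c ! x = v ! x})"
proof -
  have "\<exists>c\<in>RM 1 m. int (card S) \<le> (corr c v S)\<^sup>2"
  proof (rule ccontr)
    assume "\<not> ?thesis"
    then have "(\<Sum>c\<in>RM 1 m. (corr c v S)\<^sup>2) < int (card (RM 1 m)) * int (card S)"
      using RM_finite RM_nonempty by (intro sum_bounded_above_strict) (auto simp: card_gt_0_iff)
    with sum_corr_RM_1_squared[OF assms] show False by simp
  qed
  then obtain c where c: "c \<in> RM 1 m" and "real (card S) \<le> (real_of_int (corr c v S))\<^sup>2"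
    by (metis of_int_le_iff of_int_of_nat_eq of_int_power)
  then have "sqrt (real (card S)) \<le> \<bar>real_of_int (corr c v S)\<bar>"
    using real_sqrt_le_mono by fastforce
  moreover define c' where "c' = (if corr c v S \<ge> 0 then c else map Not c)"
  moreover have "c' \<in> RM 1 m" using c RM_1_map_Not by (simp add: c'_def)
  moreover have "corr c' v S = \<bar>corr c v S\<bar>"
    using corr_map_Not[of S c v] assms(1) RM_length[OF c] by (simp add: c'_def)
  moreover have "finite S" using assms(1) finite_subset by blast
  ultimately show ?thesis using that corr_eq_agreements[of S c' v] by auto
qed

definition common_agreement ::
    "nat \<Rightarrow> nat \<Rightarrow> (nat \<Rightarrow> bool list) \<Rightarrow> (nat \<Rightarrow> bool list) \<Rightarrow> nat set"
  where "common_agreement t n U V = {x. x < n \<and> (\<forall>i<t. U i ! x = V i ! x)}"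

lemma d_t_eq_card_common_agreement:
  assumes "\<forall>i<t. length (V i) = n \<and> length (U i) = n"
  shows "d_t t V U = n - card (common_agreement t n U V)"
proof -
  have "(\<Union>i<t. supp (vadd (V i) (U i))) = {..<n} - common_agreement t n U V"
    using assms by (auto simp: supp_def common_agreement_def)
  moreover have "common_agreement t n U V \<subseteq> {..<n}"
    by (auto simp: common_agreement_def)
  ultimately show ?thesis
    unfolding d_t_def wt_t_def by (simp add: card_Diff_subset finite_subset)
qed

fun greedy_agreement :: "real \<Rightarrow> nat \<Rightarrow> real" where
  "greedy_agreement n 0 = n"
| "greedy_agreement n (Suc k) = greedy_agreement n k / 2 + sqrt (greedy_agreement n k) / 2"

lemma sqrt_le_self: "1 \<le> x \<Longrightarrow> sqrt x \<le> x"
  by (rule real_le_lsqrt) (simp_all add: power2_eq_square)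

lemma greedy_agreement_bounds:
  "1 \<le> n \<Longrightarrow> 1 \<le> greedy_agreement n k \<and> greedy_agreement n k \<le> n"
proof (induction k)
  case (Suc k)
  then have "1 \<le> greedy_agreement n k" and "greedy_agreement n k \<le> n" by simp_all
  moreover from this have "1 \<le> sqrt (greedy_agreement n k)"
    and "sqrt (greedy_agreement n k) \<le> greedy_agreement n k"
    by (simp_all add: sqrt_le_self)
  ultimately show ?case unfolding greedy_agreement.simps by linarith
qed simp

lemma mono_half_add_half_sqrt:
  "x \<le> y \<Longrightarrow> x / 2 + sqrt x / 2 \<le> y / 2 + sqrt y / 2"
  using real_sqrt_le_mono[of x y] by linarith

lemma greedy_common_agreement:
  assumes "\<forall>i<t. length (V i) = 2 ^ m"
  obtains U where "\<forall>i<t. U i \<in> RM 1 m"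
    and "greedy_agreement (2 ^ m) t \<le> card (common_agreement t (2 ^ m) U V)"
  using assms
proof (induction t arbitrary: thesis)
  case 0
  obtain c where "c \<in> RM 1 m" using RM_nonempty by blast
  with 0 show ?case by (auto simp: common_agreement_def)
next
  case (Suc t)
  obtain U where U: "\<forall>i<t. U i \<in> RM 1 m"
    and big: "greedy_agreement (2 ^ m) t \<le> card (common_agreement t (2 ^ m) U V)"
    using Suc.IH Suc.prems(2) by auto
  let ?S = "common_agreement t (2 ^ m) U V"
  obtain c where c: "c \<in> RM 1 m"
    and c_big: "card ?S / 2 + sqrt (card ?S) / 2 \<le> card {x\<in>?S. c ! x = V t ! x}"
    using RM_1_agreement_ge[of ?S m "V t"] Suc.prems(2) by (auto simp: common_agreement_def)
  have "common_agreement (Suc t) (2 ^ m) (U(t := c)) V = {x\<in>?S. c ! x = V t ! x}"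
    by (auto simp: common_agreement_def less_Suc_eq)
  moreover have "greedy_agreement (2 ^ m) (Suc t) \<le> card ?S / 2 + sqrt (card ?S) / 2"
    using mono_half_add_half_sqrt[OF big] by simp
  ultimately have
    "greedy_agreement (2 ^ m) (Suc t) \<le> card (common_agreement (Suc t) (2 ^ m) (U(t := c)) V)"
    using c_big by simp
  moreover have "\<forall>i<Suc t. (U(t := c)) i \<in> RM 1 m" using U c by (simp add: less_Suc_eq)
  ultimately show ?case by (rule Suc.prems(1)[rotated])
qed

lemma R_t_1_le_greedy_agreement: "real (R_t t 1 m) \<le> 2 ^ m - \<lceil>greedy_agreement (2 ^ m) t\<rceil>"
proof -
  define K where "K = nat \<lceil>greedy_agreement (2 ^ m) t\<rceil>"
  have "R_t t 1 m \<le> 2 ^ m - K"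
    unfolding R_t_def
  proof (rule cov_rad_t_le)
    fix V :: "nat \<Rightarrow> bool list"
    assume len: "\<forall>i<t. length (V i) = 2 ^ m"
    then obtain U where U: "\<forall>i<t. U i \<in> RM 1 m"
      and big: "greedy_agreement (2 ^ m) t \<le> card (common_agreement t (2 ^ m) U V)"
      by (rule greedy_common_agreement)
    have "d_t t V U = 2 ^ m - card (common_agreement t (2 ^ m) U V)"
      using len U RM_length by (intro d_t_eq_card_common_agreement) blast
    also have "\<dots> \<le> 2 ^ m - K"
    proof (rule diff_le_mono2)
      show "K \<le> card (common_agreement t (2 ^ m) U V)"
        using big unfolding K_def by (simp add: nat_le_iff ceiling_le_iff)
    qed
    finally show "\<exists>U. (\<forall>i<t. U i \<in> RM 1 m) \<and> d_t t V U \<le> 2 ^ m - K" using U by blast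
  qed
  then have "real (R_t t 1 m) \<le> real (2 ^ m - K)" by (simp only: of_nat_le_iff)
  moreover have "real K = \<lceil>greedy_agreement (2 ^ m) t\<rceil>" and "K \<le> 2 ^ m"
    using greedy_agreement_bounds[of "2 ^ m" t] by (simp_all add: K_def nat_le_iff ceiling_le_iff)
  ultimately show ?thesis by (simp add: of_nat_diff)
qed

lemma square_le_two_power: "4 \<le> m \<Longrightarrow> m\<^sup>2 \<le> (2::nat) ^ m"
proof (induction m rule: nat_induct_at_least)
  case base
  then show ?case by simp
next
  case (Suc m)
  have "4 * m \<le> m * m" by (rule mult_le_mono1[OF Suc.hyps])
  moreover have "(Suc m)\<^sup>2 = m * m + 2 * m + 1" "m\<^sup>2 = m * m"
    by (simp_all add: power2_eq_square)
  ultimately have "(Suc m)\<^sup>2 \<le> 2 * m\<^sup>2" using Suc.hyps by linarith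
  also have "\<dots> \<le> 2 ^ Suc m" using Suc.IH by simp
  finally show ?case .
qed

lemma le_sqrt_two_power: "m \<noteq> 3 \<Longrightarrow> real m \<le> sqrt (2 ^ m)"
proof -
  assume "m \<noteq> 3"
  then have "m\<^sup>2 \<le> (2::nat) ^ m"
  proof (cases "4 \<le> m")
    case False
    with \<open>m \<noteq> 3\<close> have "m \<in> {0, 1, 2}" by auto
    then show ?thesis by auto
  qed (rule square_le_two_power)
  then have "(real m)\<^sup>2 \<le> 2 ^ m" by (metis of_nat_le_iff of_nat_numeral of_nat_power)
  then show ?thesis by (rule real_le_rsqrt)
qed

lemma le_six_fifths_sqrt_two_power: "real m \<le> 6 / 5 * sqrt (2 ^ m)"
proof -
  have "25 * m\<^sup>2 \<le> 36 * (2::nat) ^ m"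
  proof (cases "4 \<le> m")
    case False
    then have "m \<in> {0, 1, 2, 3}" by auto
    then show ?thesis by auto
  next
    case True
    then have "m\<^sup>2 \<le> 2 ^ m" by (rule square_le_two_power)
    then show ?thesis by linarith
  qed
  then have "real (25 * m\<^sup>2) \<le> real (36 * 2 ^ m)" by (simp only: of_nat_le_iff)
  then have "(5 / 6 * real m)\<^sup>2 \<le> 2 ^ m" by (simp add: power_mult_distrib power_divide)
  then have "5 / 6 * real m \<le> sqrt (2 ^ m)" by (rule real_le_rsqrt)
  then show ?thesis by simp
qed

lemma greedy_agreement_ge: "0 \<le> n \<Longrightarrow> n / 2 ^ k \<le> greedy_agreement n k"
proof (induction k)
  case 0
  then show ?case by simp
next
  case (Suc k)
  have IH: "n / 2 ^ k \<le> greedy_agreement n k" by (rule Suc.IH[OF Suc.prems])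
  have "n / 2 ^ Suc k = (n / 2 ^ k) / 2" by simp
  also have "\<dots> \<le> greedy_agreement n k / 2" using IH by (simp add: divide_right_mono)
  also have "\<dots> \<le> greedy_agreement n (Suc k)"
    using IH order_trans[OF divide_nonneg_nonneg[OF Suc.prems] IH] by simp
  finally show ?case .
qed

lemma greedy_agreement_Suc_Suc_ge:
  fixes n :: real and k :: nat
  assumes "0 \<le> n"
  defines "q \<equiv> n / 2 ^ Suc (Suc k)"
  shows "q + (1 + sqrt 2) / 2 * sqrt q \<le> greedy_agreement n (Suc (Suc k))"
proof -
  have q: "0 \<le> q" "n / 2 ^ k = 4 * q" using assms by (simp_all add: q_def)
  have "sqrt (4 * q) = 2 * sqrt q" by (simp add: real_sqrt_mult)
  then have "2 * q + sqrt q \<le> greedy_agreement n (Suc k)"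
    using mono_half_add_half_sqrt[OF greedy_agreement_ge[OF assms(1), of k]] q by simp
  then have "(2 * q + sqrt q) / 2 + sqrt (2 * q + sqrt q) / 2 \<le> greedy_agreement n (Suc (Suc k))"
    unfolding greedy_agreement.simps(2)[of n "Suc k"] by (rule mono_half_add_half_sqrt)
  moreover have "sqrt 2 * sqrt q \<le> sqrt (2 * q + sqrt q)"
    by (simp add: real_sqrt_mult[symmetric] q)
  ultimately show ?thesis by (simp add: field_simps)
qed

lemma greedy_agreement_two_power_ge_of_two_le:
  assumes "2 \<le> t"
  shows "2 ^ m / 2 ^ t + sqrt (2 ^ t - 1) / 2 ^ t * real m \<le> greedy_agreement (2 ^ m) t"
proof -
  obtain k where t: "t = Suc (Suc k)" using assms by (metis add_2_eq_Suc le_Suc_ex)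
  \<comment> \<open>Two greedy steps gain the factor (1 + sqrt 2)/2 > 6/5, and 6/5 bounds m / sqrt (2 ^ m).\<close>
  define Q :: real where "Q = 2 ^ t"
  define s where "s = sqrt (2 ^ m / Q)"
  have "Q > 0" by (simp add: Q_def)
  have "sqrt (Q - 1) / Q \<le> sqrt Q / Q"
    using \<open>Q > 0\<close> by (simp add: divide_right_mono real_sqrt_le_mono)
  also have "\<dots> = 1 / sqrt Q"
    using \<open>Q > 0\<close> by (simp add: field_simps)
  finally have "sqrt (Q - 1) / Q * real m \<le> 1 / sqrt Q * real m"
    by (rule mult_right_mono) simp
  also have "\<dots> \<le> 1 / sqrt Q * (6 / 5 * sqrt (2 ^ m))"
    using \<open>Q > 0\<close> by (intro mult_left_mono[OF le_six_fifths_sqrt_two_power]) simp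
  also have "\<dots> = 6 / 5 * s" by (simp add: s_def real_sqrt_divide)
  also have "\<dots> \<le> (1 + sqrt 2) / 2 * s"
  proof (rule mult_right_mono)
    have "7 / 5 \<le> sqrt 2" by (rule real_le_rsqrt) (simp add: power2_eq_square)
    then show "6 / 5 \<le> (1 + sqrt 2) / 2" by simp
  qed (simp add: s_def Q_def)
  finally have "sqrt (Q - 1) / Q * real m \<le> (1 + sqrt 2) / 2 * s" .
  moreover have "2 ^ m / Q + (1 + sqrt 2) / 2 * s \<le> greedy_agreement (2 ^ m) t"
    unfolding Q_def s_def t by (rule greedy_agreement_Suc_Suc_ge) simp
  ultimately show ?thesis unfolding Q_def by linarith
qed

lemma greedy_agreement_two_power_ge:
  "2 ^ m / 2 ^ t + sqrt (2 ^ t - 1) / 2 ^ t * real m \<le> \<lceil>greedy_agreement (2 ^ m) t\<rceil>"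
proof -
  consider "t = 0" | "t = 1" "m = 3" | "t = 1" "m \<noteq> 3" | "2 \<le> t" by linarith
  then show ?thesis
  proof cases
    case 1
    then show ?thesis by simp
  next
    case 2
    \<comment> \<open>3 > sqrt 8 is the one exception to m \<le> sqrt (2 ^ m); the ceiling absorbs it.\<close>
    have "2 < sqrt 8" by (rule real_less_rsqrt) simp
    then have "6 \<le> \<lceil>greedy_agreement 8 1\<rceil>" by (simp add: le_ceiling_iff)
    then have "6 \<le> real_of_int \<lceil>greedy_agreement (2 ^ m) t\<rceil>" using 2 by simp
    moreover have "2 ^ m / 2 ^ t + sqrt (2 ^ t - 1) / 2 ^ t * real m = (11 / 2 :: real)"
      using 2 by simp
    ultimately show ?thesis by linarith
  next
    case 3
    then have "2 ^ m / 2 + real m / 2 \<le> greedy_agreement (2 ^ m) t"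
      using le_sqrt_two_power by simp
    moreover have "2 ^ m / 2 ^ t + sqrt (2 ^ t - 1) / 2 ^ t * real m = 2 ^ m / 2 + real m / (2 :: real)"
      using 3 by simp
    ultimately show ?thesis by linarith
  next
    case 4
    then show ?thesis
      using greedy_agreement_two_power_ge_of_two_le le_of_int_ceiling order_trans by blast
  qed
qed

definition rm_bound :: "nat \<Rightarrow> nat \<Rightarrow> nat \<Rightarrow> real" where
  "rm_bound t r m = (1 - 1 / 2 ^ t) * 2 ^ m - sqrt (2 ^ t - 1) / 2 ^ t * real (m choose r)"

lemma rm_bound_Suc_Suc: "rm_bound t (Suc r) (Suc m) = rm_bound t (Suc r) m + rm_bound t r m"
  by (simp add: rm_bound_def field_simps)

lemma rm_bound_diag_nonneg: "0 \<le> rm_bound t m m"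
proof -
  have "sqrt (2 ^ t - 1) \<le> (2 ^ t - 1 :: real)"
    by (cases t) (simp_all add: sqrt_le_self)
  also have "\<dots> \<le> (2 ^ t - 1) * 2 ^ m"
    using mult_left_mono[of 1 "2 ^ m" "2 ^ t - 1 :: real"] by simp
  finally have "0 \<le> ((2 ^ t - 1) * 2 ^ m - sqrt (2 ^ t - 1)) / (2 ^ t :: real)" by simp
  also have "\<dots> = rm_bound t m m" by (simp add: rm_bound_def field_simps)
  finally show ?thesis .
qed

lemma R_t_1_le_rm_bound: "real (R_t t 1 m) \<le> rm_bound t 1 m"
proof -
  have "(1 - 1 / 2 ^ t) * 2 ^ m = 2 ^ m - 2 ^ m / (2 ^ t :: real)" by (simp add: algebra_simps)
  then show ?thesis
    using R_t_1_le_greedy_agreement[of t m] greedy_agreement_two_power_ge[of m t] by (simp add: rm_bound_def)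
qed

theorem lemma17:
  fixes m t r :: nat
  assumes "1 \<le> r" and "r \<le> m"
  shows "real (R_t t r m) \<le> (1 - 1 / 2 ^ t) * 2 ^ m
           - sqrt (2 ^ t - 1) / 2 ^ t * real (m choose r)"
  unfolding rm_bound_def[symmetric] using assms
proof (induction m arbitrary: r)
  case 0
  then show ?case by simp
next
  case (Suc m)
  consider "r = 1" | "r = Suc m" | r' where "r = Suc r'" "1 \<le> r'" "r \<le> m"
    using Suc.prems by (metis One_nat_def le_SucE not0_implies_Suc not_one_le_zero less_eq_Suc_le)
  then show ?case
  proof cases
    case 1
    then show ?thesis using R_t_1_le_rm_bound[of t "Suc m"] by simp
  next
    case 2
    then show ?thesis by (simp add: R_t_diag rm_bound_diag_nonneg)
  next
    case 3
    have "real (R_t t r (Suc m)) \<le> real (R_t t r m) + real (R_t t r' m)"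
      using R_t_Suc_le[of r m t] 3 by simp
    also have "\<dots> \<le> rm_bound t r m + rm_bound t r' m"
      using Suc.IH 3 by (simp add: add_mono)
    also have "\<dots> = rm_bound t r (Suc m)"
      by (simp add: 3 rm_bound_Suc_Suc)
    finally show ?thesis .
  qed
qed

end
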